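(* Let $G\in\mathbb{R}^{m\times n}$, $b\in\mathbb{R}^m$, and $\mathcal{P}=\{x\in\mathbb{R}^n : Gx\le b\}$. Let $f_d:\mathbb{R}^n\to\mathbb{R}^n$ be continuously differentiable and consider the discrete system $x_{k+1}=f_d(x_k)$. Then $\mathcal{P}$ is an invariant set for this discrete system if and only if there exists a matrix $H\in\mathbb{R}^{m\times m}$ with all entries nonnegative such that $$HGx-Gf_d(x)\ge Hb-b\quad\text{for all } x\in\mathcal{P},$$ where the inequality between vectors is componentwise.
   Context: A set $\mathcal{S}\subseteq\mathbb{R}^n$ is an invariant set for the discrete system $x_{k+1}=f_d(x_k)$ if $x_k\in\mathcal{S}$ implies $x_{k+1}\in\mathcal{S}$ for all $k\in\mathbb{N}$. *)

theory Defs
  imports "HOL-Analysis.Analysis"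
begin

definition invariant_set_discrete :: "'a set \<Rightarrow> ('a \<Rightarrow> 'a) \<Rightarrow> bool" where
  "invariant_set_discrete S f \<longleftrightarrow> (\<forall>x. x \<in> S \<longrightarrow> f x \<in> S)"

definition continuously_differentiable :: "('a::real_normed_vector \<Rightarrow> 'b::real_normed_vector) \<Rightarrow> bool" where
  "continuously_differentiable f \<longleftrightarrow>
     (\<exists>f' :: 'a \<Rightarrow> 'a \<Rightarrow>\<^sub>L 'b. (\<forall>x. (f has_derivative blinfun_apply (f' x)) (at x)) \<and> continuous_on UNIV f')"

end

theory Submission
  imports Defs
begin

text \<open>If \<open>Gx \<le> b\<close>, a nonnegative \<open>H\<close> maps the slack \<open>Gx - b \<le> 0\<close> to
  \<open>H(Gx - b) \<le> 0\<close>, so the certificate inequality yields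
  \<open>G f(x) \<le> b + H(Gx - b) \<le> b\<close>. Conversely, invariance means exactly that the
  certificate inequality holds with \<open>H = 0\<close>.\<close>

lemma nonneg_matrix_vector_mult_mono:
  fixes H :: "'a::{ordered_comm_semiring,semiring_1}^'n^'m"
  assumes "\<And>i j. 0 \<le> H $ i $ j" and "y \<le> z"
  shows "H *v y \<le> H *v z"
  using assms unfolding less_eq_vec_def matrix_vector_mult_def
  by (auto intro!: sum_mono mult_left_mono)

lemma invariant_set_discrete_polyhedron_iff:
  "invariant_set_discrete {x. G *v x \<le> b} f \<longleftrightarrow> (\<forall>x. G *v x \<le> b \<longrightarrow> G *v f x \<le> b)"
  unfolding invariant_set_discrete_def by simp

lemma nonneg_certificate_imp_polyhedron_image:
  fixes G :: "real^'n^'m" and H :: "real^'m^'m"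
  assumes H_nonneg: "\<And>i j. 0 \<le> H $ i $ j"
    and certificate: "(H ** G) *v x - G *v f x \<ge> H *v b - b"
    and "G *v x \<le> b"
  shows "G *v f x \<le> b"
proof -
  have "H *v (G *v x) \<le> H *v b"
    using nonneg_matrix_vector_mult_mono[OF H_nonneg \<open>G *v x \<le> b\<close>] .
  moreover have "G *v f x \<le> b + (H *v (G *v x) - H *v b)"
    using certificate by (simp add: matrix_vector_mul_assoc algebra_simps)
  ultimately show ?thesis
    unfolding less_eq_vec_def by (smt (verit) vector_add_component vector_minus_component)
qed

theorem theorem12:
  fixes G :: "real^'n^'m" and b :: "real^'m" and f :: "real^'n \<Rightarrow> real^'n"
  assumes "continuously_differentiable f"
  shows "invariant_set_discrete {x. G *v x \<le> b} f \<longleftrightarrow>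
         (\<exists>H :: real^'m^'m. (\<forall>i j. H $ i $ j \<ge> 0) \<and>
            (\<forall>x \<in> {x. G *v x \<le> b}. (H ** G) *v x - G *v f x \<ge> H *v b - b))"
  unfolding invariant_set_discrete_polyhedron_iff
proof
  assume "\<forall>x. G *v x \<le> b \<longrightarrow> G *v f x \<le> b"
  then have "\<forall>x \<in> {x. G *v x \<le> b}. (0 ** G) *v x - G *v f x \<ge> (0::real^'m^'m) *v b - b"
    by (simp add: less_eq_vec_def)
  then show "\<exists>H :: real^'m^'m. (\<forall>i j. H $ i $ j \<ge> 0) \<and>
      (\<forall>x \<in> {x. G *v x \<le> b}. (H ** G) *v x - G *v f x \<ge> H *v b - b)"
    by (intro exI[of _ 0]) simp
next
  assume "\<exists>H :: real^'m^'m. (\<forall>i j. H $ i $ j \<ge> 0) \<and>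
      (\<forall>x \<in> {x. G *v x \<le> b}. (H ** G) *v x - G *v f x \<ge> H *v b - b)"
  then show "\<forall>x. G *v x \<le> b \<longrightarrow> G *v f x \<le> b"
    using nonneg_certificate_imp_polyhedron_image by blast
qed

end
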